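(* Let $\mathcal{L}=(n,\mathcal{M},\mathcal{C})$ be a simple linearization and let $\mathcal{T}\subseteq\mathcal{P}$. Suppose $D(\mathcal{L})$ has a subgraph satisfying (a) its underlying undirected graph is a cycle and (b) its node set is contained in $\mathrm{succ}(\mathcal{T})$. Then $D(\mathcal{L})$ has a subgraph $Z$ satisfying (a) and (b) such that either $|U(Z)|=1$, or $Z$ satisfies all of the following: (c) for all $s\in\mathcal{S}$ and $t\in\mathcal{T}$ there is at most one directed $t$-$s$-path in $D(\mathcal{L})$; (d) $|\mathrm{pred}(s)\cap L(Z)|\le1$ for all $s\in\mathcal{S}$; (e) $|\mathrm{succ}(t)\cap U(Z)|\le1$ for all $t\in\mathcal{T}$.
   Context: $[n]=\{1,\dots,n\}$; a monomial is a nonempty subset of $[n]$; $\mathcal{S}=\{\{i\}:i\in[n]\}$. A linearization is a triple $\mathcal{L}=(n,\mathcal{M},\mathcal{C})$, where $\mathcal{M}$ is a set of monomials with $\mathcal{S}\subseteq\mathcal{M}$ and $\mathcal{C}$ is a set of AND-constraints; each AND-constraint is a set $c\subseteq\mathcal{M}$ whose union $\bigcup c$ (resultant) lies in $\mathcal{M}$. $\mathcal{P}=\mathcal{M}\setminus\mathcal{S}$. Linearizations are consistent: each $m\in\mathcal{P}$ is the resultant of some $c$ with $|m'|<|m|$ for all $m'\in c$. $\mathcal{L}$ is simple if each proper monomial is the resultant of exactly one AND-constraint and $|\mathcal{C}|=|\mathcal{P}|$. $D(\mathcal{L})$ has node set $\mathcal{M}$ and, for each $c\in\mathcal{C}$,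 arcs from $\bigcup c$ to each $m\in c$. Cycles are simple cycles. $\mathrm{succ}(W)$ (resp. $\mathrm{pred}(W)$) is the set of nodes of $D(\mathcal{L})$ reachable from (resp. from which one can reach) a node of $W$ by a directed path, including $W$; for a node $w$, $\mathrm{succ}(w)=\mathrm{succ}(\{w\})$ and $\mathrm{pred}(w)=\mathrm{pred}(\{w\})$. For a subgraph $Z$, $U(Z)$ is the set of nodes with out-degree at least $2$ in $Z$ (upper nodes) and $L(Z)$ the set of nodes with in-degree at least $2$ in $Z$ (lower nodes). *)

theory Defs
  imports Main
begin

type_synonym monomial = "nat set"

definition singletons :: "nat \<Rightarrow> monomial set" where
  "singletons n = {{i} | i. i \<in> {1..n}}"

definition proper_monomials :: "nat \<Rightarrow> monomial set \<Rightarrow> monomial set" where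
  "proper_monomials n M = M - singletons n"

definition linearization :: "nat \<Rightarrow> monomial set \<Rightarrow> monomial set set \<Rightarrow> bool" where
  "linearization n M C \<longleftrightarrow>
     (\<forall>m\<in>M. m \<noteq> {} \<and> m \<subseteq> {1..n}) \<and>
     singletons n \<subseteq> M \<and>
     (\<forall>c\<in>C. c \<subseteq> M \<and> \<Union>c \<in> M) \<and>
     (\<forall>m\<in>proper_monomials n M. \<exists>c\<in>C. \<Union>c = m \<and> (\<forall>m'\<in>c. card m' < card m))"

definition simple_linearization :: "nat \<Rightarrow> monomial set \<Rightarrow> monomial set set \<Rightarrow> bool" where
  "simple_linearization n M C \<longleftrightarrow>
     linearization n M C \<and>
     (\<forall>m\<in>proper_monomials n M. \<exists>!c. c \<in> C \<and> \<Union>c = m) \<and>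
     card C = card (proper_monomials n M)"

text \<open>Arc set of D(L): for each AND-constraint c, arcs from its resultant to each member.\<close>
definition arcs :: "monomial set set \<Rightarrow> (monomial \<times> monomial) set" where
  "arcs C = {(\<Union>c, m) | c m. c \<in> C \<and> m \<in> c}"

definition succs :: "monomial set set \<Rightarrow> monomial set \<Rightarrow> monomial set" where
  "succs C W = {v. \<exists>w\<in>W. (w, v) \<in> (arcs C)\<^sup>*}"

definition preds :: "monomial set set \<Rightarrow> monomial set \<Rightarrow> monomial set" where
  "preds C W = {v. \<exists>w\<in>W. (v, w) \<in> (arcs C)\<^sup>*}"

definition is_subgraph :: "monomial set \<Rightarrow> monomial set set \<Rightarrow>
    monomial set \<Rightarrow> (monomial \<times> monomial) set \<Rightarrow> bool" where
  "is_subgraph M C V E \<longleftrightarrow> V \<subseteq> M \<and> E \<subseteq> arcs C \<and>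
     (\<forall>(a,b)\<in>E. a \<in> V \<and> b \<in> V)"

definition undirected_cycle :: "'a set \<Rightarrow> ('a \<times> 'a) set \<Rightarrow> bool" where
  "undirected_cycle V E \<longleftrightarrow>
     (\<exists>vs. distinct vs \<and> length vs \<ge> 3 \<and> set vs = V \<and>
        inj_on (\<lambda>(a,b). {a,b}) E \<and>
        (\<lambda>(a,b). {a,b}) ` E =
          {{vs ! i, vs ! (Suc i mod length vs)} | i. i < length vs})"

definition upper_nodes :: "'a set \<Rightarrow> ('a \<times> 'a) set \<Rightarrow> 'a set" where
  "upper_nodes V E = {v\<in>V. card {w. (v, w) \<in> E} \<ge> 2}"

definition lower_nodes :: "'a set \<Rightarrow> ('a \<times> 'a) set \<Rightarrow> 'a set" where
  "lower_nodes V E = {v\<in>V. card {u. (u, v) \<in> E} \<ge> 2}"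

definition dpath :: "('a \<times> 'a) set \<Rightarrow> 'a list \<Rightarrow> bool" where
  "dpath A p \<longleftrightarrow> p \<noteq> [] \<and> distinct p \<and>
     (\<forall>i. Suc i < length p \<longrightarrow> (p ! i, p ! Suc i) \<in> A)"

end

theory Submission
  imports Defs
begin

(* Arcs strictly decrease the degree of monomials, so D(L) is acyclic and every cycle has an
   upper node.  Choose a cycle Z inside succ(T) with the fewest upper nodes; if |U(Z)| \<noteq> 1 it
   has at least two, and (c)-(e) follow by contradiction.  Two distinct t-s-paths enclose a cycle
   whose only upper node is the node where they diverge.  Two lower nodes of Z with a common
   descendant, or two upper nodes with a common ancestor, are joined by a path Q meeting Z only in
   its ends.  Splitting Z along Q gives two cycles, each made of Q and one arc of Z, whose upper
   nodes are upper nodes of Z on that arc or sources of Q that are not lower nodes of Z.  In the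
   lower case Q has no such sources, so both halves would have to contain all of U(Z); in the
   upper case the single source of Q replaces the two upper nodes it reaches.  The same splitting
   argument first shows that no path leaves a lower node and none enters an upper node of Z,
   which is what keeps Q outside Z. *)

section \<open>Edges of walks and cycles\<close>

definition undirected_edges :: "('a \<times> 'a) set \<Rightarrow> 'a set set" where
  "undirected_edges A = (\<lambda>(a, b). {a, b}) ` A"

fun walk_edges :: "'a list \<Rightarrow> 'a set set" where
  "walk_edges (x # y # zs) = insert {x, y} (walk_edges (y # zs))"
| "walk_edges _ = {}"

lemma walk_edges_append: "walk_edges (xs @ y # ys) = walk_edges (xs @ [y]) \<union> walk_edges (y # ys)"
  by (induction xs rule: walk_edges.induct) auto

lemma walk_edges_rev [simp]: "walk_edges (rev xs) = walk_edges xs"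
proof (induction xs rule: walk_edges.induct)
  case (1 x y zs)
  then show ?case using walk_edges_append[of "rev zs" y "[x]"] by auto
qed auto

lemma walk_edges_subset: "e \<in> walk_edges p \<Longrightarrow> e \<subseteq> set p"
  by (induction p rule: walk_edges.induct) auto

lemma walk_edges_conv_nth: "walk_edges p = (\<lambda>i. {p ! i, p ! Suc i}) ` {..<length p - 1}"
proof (induction p rule: walk_edges.induct)
  case (1 x y zs)
  then show ?case by (simp add: lessThan_Suc_eq_insert_0 image_image)
qed auto

lemma walk_edges_incident:
  assumes "v \<in> set p" "2 \<le> length p"
  shows "\<exists>w. {v, w} \<in> walk_edges p"
  using assms
proof (induction p rule: walk_edges.induct)
  case (1 x y zs)
  then show ?case by (cases zs) (auto simp: insert_commute)
qed auto

definition cycle_edges :: "'a list \<Rightarrow> 'a set set" where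
  "cycle_edges cs = walk_edges (cs @ [hd cs])"

lemma cycle_edges_subset: "e \<in> cycle_edges cs \<Longrightarrow> e \<subseteq> set cs"
  unfolding cycle_edges_def using walk_edges_subset[of e "cs @ [hd cs]"] by (cases cs) auto

lemma cycle_edges_split:
  "cycle_edges (x # xs @ y # ys) = walk_edges (x # xs @ [y]) \<union> walk_edges (y # ys @ [x])"
  unfolding cycle_edges_def using walk_edges_append[of "x # xs" y "ys @ [x]"] by simp

lemma cycle_edges_rotate: "cycle_edges (xs @ ys) = cycle_edges (ys @ xs)"
proof (cases "xs = [] \<or> ys = []")
  case False
  then obtain x xs' y ys' where "xs = x # xs'" "ys = y # ys'" by (auto simp: neq_Nil_conv)
  then show ?thesis
    using cycle_edges_split[of x xs' y ys'] cycle_edges_split[of y ys' x xs'] by auto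
qed auto

lemma cycle_edges_rotate_n [simp]: "cycle_edges (rotate n cs) = cycle_edges cs"
  by (metis append_take_drop_id cycle_edges_rotate rotate_drop_take)

lemma cycle_edges_conv_nth:
  assumes "cs \<noteq> []"
  shows "cycle_edges cs = {{cs ! i, cs ! (Suc i mod length cs)} | i. i < length cs}"
proof -
  have "(cs @ [hd cs]) ! i = cs ! i" "(cs @ [hd cs]) ! Suc i = cs ! (Suc i mod length cs)"
    if "i < length cs" for i
    using that assms by (auto simp: nth_append mod_if hd_conv_nth)
  then show ?thesis
    unfolding cycle_edges_def walk_edges_conv_nth by force
qed

lemma cycle_edges_two_neighbours:
  assumes "distinct cs" "3 \<le> length cs" "v \<in> set cs"
  shows "\<exists>a b. a \<noteq> b \<and> {w. {v, w} \<in> cycle_edges cs} = {a, b}"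
proof -
  obtain pre post where cs: "cs = pre @ v # post" using assms(3) by (meson split_list)
  define r where "r = post @ pre"
  have "cycle_edges cs = cycle_edges (v # r)"
    using cycle_edges_rotate[of pre "v # post"] by (simp add: cs r_def)
  moreover have r: "distinct r" "v \<notin> set r" "2 \<le> length r"
    using assms by (auto simp: cs r_def)
  moreover obtain a r' b where r': "r = a # r' @ [b]"
    using r(3) by (cases r rule: rev_cases) (auto, metis Suc_le_length_iff neq_Nil_conv)
  moreover have "cycle_edges (v # r) = insert {v, a} (insert {b, v} (walk_edges r))"
    using walk_edges_append[of "v # a # r'" b "[v]"]
    by (simp add: cycle_edges_def r' insert_commute)
  moreover have "{v, w} \<notin> walk_edges r" for w
    using walk_edges_subset r(2) by blast
  ultimately show ?thesis
    by (intro exI[of _ a] exI[of _ b]) (auto simp: doubleton_eq_iff)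
qed

section \<open>Upper and lower nodes of a cycle\<close>

definition source_in :: "('a \<times> 'a) set \<Rightarrow> 'a set set \<Rightarrow> 'a \<Rightarrow> bool" where
  "source_in A F v \<longleftrightarrow> (\<forall>w. {v, w} \<in> F \<longrightarrow> (v, w) \<in> A)"

lemma source_in_Un [simp]: "source_in A (F \<union> G) v \<longleftrightarrow> source_in A F v \<and> source_in A G v"
  unfolding source_in_def by blast

lemma source_in_antimono: "source_in A G v \<Longrightarrow> F \<subseteq> G \<Longrightarrow> source_in A F v"
  unfolding source_in_def by blast

lemma source_in_walk_edges_notin: "v \<notin> set p \<Longrightarrow> source_in A (walk_edges p) v"
  unfolding source_in_def using walk_edges_subset by blast

definition is_cycle :: "('a \<times> 'a) set \<Rightarrow> 'a list \<Rightarrow> bool" where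
  "is_cycle A cs \<longleftrightarrow> distinct cs \<and> 3 \<le> length cs \<and> cycle_edges cs \<subseteq> undirected_edges A"

definition cycle_arcs :: "('a \<times> 'a) set \<Rightarrow> 'a list \<Rightarrow> ('a \<times> 'a) set" where
  "cycle_arcs A cs = {(a, b) \<in> A. {a, b} \<in> cycle_edges cs}"

abbreviation cycle_upper :: "('a \<times> 'a) set \<Rightarrow> 'a list \<Rightarrow> 'a set" where
  "cycle_upper A cs \<equiv> upper_nodes (set cs) (cycle_arcs A cs)"

abbreviation cycle_lower :: "('a \<times> 'a) set \<Rightarrow> 'a list \<Rightarrow> 'a set" where
  "cycle_lower A cs \<equiv> lower_nodes (set cs) (cycle_arcs A cs)"

lemma cycle_upper_iff:
  assumes "distinct cs" "3 \<le> length cs"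
  shows "v \<in> cycle_upper A cs \<longleftrightarrow> v \<in> set cs \<and> source_in A (cycle_edges cs) v"
proof (cases "v \<in> set cs")
  case True
  then obtain a b where ab: "a \<noteq> b" "{w. {v, w} \<in> cycle_edges cs} = {a, b}"
    using cycle_edges_two_neighbours assms by metis
  then have "{w. (v, w) \<in> cycle_arcs A cs} = {w \<in> {a, b}. (v, w) \<in> A}"
    unfolding cycle_arcs_def by blast
  moreover have "{w \<in> {a, b}. (v, w) \<in> A}
      = (if (v, a) \<in> A then {a} else {}) \<union> (if (v, b) \<in> A then {b} else {})"
    by auto
  ultimately show ?thesis
    using True ab unfolding upper_nodes_def source_in_def by (auto simp: card_insert_if)
qed (simp add: upper_nodes_def)

lemma cycle_lower_iff:
  assumes "distinct cs" "3 \<le> length cs"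
  shows "v \<in> cycle_lower A cs \<longleftrightarrow> v \<in> set cs \<and> source_in (A\<inverse>) (cycle_edges cs) v"
proof -
  have "cycle_arcs (A\<inverse>) cs = (cycle_arcs A cs)\<inverse>"
    unfolding cycle_arcs_def by (auto simp: insert_commute)
  then have "cycle_lower A cs = cycle_upper (A\<inverse>) cs"
    unfolding lower_nodes_def upper_nodes_def by simp
  then show ?thesis using cycle_upper_iff[OF assms] by simp
qed

lemma is_cycle_upper_iff:
  "is_cycle A cs \<Longrightarrow> v \<in> cycle_upper A cs \<longleftrightarrow> v \<in> set cs \<and> source_in A (cycle_edges cs) v"
  unfolding is_cycle_def by (intro cycle_upper_iff) auto

lemma is_cycle_lower_iff:
  "is_cycle A cs \<Longrightarrow> v \<in> cycle_lower A cs \<longleftrightarrow> v \<in> set cs \<and> source_in (A\<inverse>) (cycle_edges cs) v"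
  unfolding is_cycle_def by (intro cycle_lower_iff) auto

lemma cycle_lower_not_source:
  assumes "asym A" "is_cycle A cs" "v \<in> cycle_lower A cs"
    and "{v, w} \<in> cycle_edges cs" "{v, w} \<in> F"
  shows "\<not> source_in A F v"
proof
  assume "source_in A F v"
  then have "(v, w) \<in> A" using assms(5) unfolding source_in_def by blast
  moreover have "(w, v) \<in> A"
    using assms(3,4) is_cycle_lower_iff[OF assms(2)] unfolding source_in_def by auto
  ultimately show False using assms(1) by (auto dest: asymD)
qed

lemma is_cycle_rotate_n [simp]: "is_cycle A (rotate n cs) \<longleftrightarrow> is_cycle A cs"
  unfolding is_cycle_def by simp

lemma cycle_arcs_rotate_n [simp]: "cycle_arcs A (rotate n cs) = cycle_arcs A cs"
  unfolding cycle_arcs_def by simp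

lemma cycle_upper_nonempty:
  assumes "acyclic A" "is_cycle A cs"
  shows "cycle_upper A cs \<noteq> {}"
proof -
  let ?B = "A \<inter> set cs \<times> set cs"
  have "wf ?B"
    using assms(1) by (intro finite_acyclic_wf) (auto elim: acyclic_subset)
  moreover have "set cs \<noteq> {}"
    using assms(2) unfolding is_cycle_def by auto
  ultimately obtain v where v: "v \<in> set cs" "\<And>w. (w, v) \<in> ?B \<Longrightarrow> w \<notin> set cs"
    by (rule wfE_min') blast+
  have "(v, w) \<in> A" if "{v, w} \<in> cycle_edges cs" for w
  proof -
    have "w \<in> set cs"
      using that cycle_edges_subset by blast
    moreover have "{v, w} \<in> undirected_edges A"
      using that assms(2) unfolding is_cycle_def by blast
    then have "(v, w) \<in> A \<or> (w, v) \<in> A"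
      unfolding undirected_edges_def by (auto simp: doubleton_eq_iff)
    ultimately show ?thesis using v by blast
  qed
  then have "v \<in> cycle_upper A cs"
    using is_cycle_upper_iff[OF assms(2)] v(1) unfolding source_in_def by blast
  then show ?thesis by blast
qed

lemma is_cycle_undirected_cycle:
  assumes "asym A" "is_cycle A cs"
  shows "undirected_cycle (set cs) (cycle_arcs A cs)"
  unfolding undirected_cycle_def
proof (intro exI conjI)
  show "inj_on (\<lambda>(a, b). {a, b}) (cycle_arcs A cs)"
    using assms(1) unfolding inj_on_def cycle_arcs_def by (auto simp: doubleton_eq_iff dest: asymD)
  have "(\<lambda>(a, b). {a, b}) ` cycle_arcs A cs = cycle_edges cs"
    using assms(2) unfolding is_cycle_def cycle_arcs_def undirected_edges_def by force
  also have "\<dots> = {{cs ! i, cs ! (Suc i mod length cs)} | i. i < length cs}"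
    using assms(2) by (intro cycle_edges_conv_nth) (auto simp: is_cycle_def)
  finally show "(\<lambda>(a, b). {a, b}) ` cycle_arcs A cs = \<dots>" .
qed (use assms(2) in \<open>auto simp: is_cycle_def\<close>)

lemma undirected_cycle_is_cycle:
  assumes "undirected_cycle V E" "E \<subseteq> A"
  obtains cs where "is_cycle A cs" "set cs = V"
proof -
  obtain cs where cs: "distinct cs" "3 \<le> length cs" "set cs = V"
    "(\<lambda>(a, b). {a, b}) ` E = {{cs ! i, cs ! (Suc i mod length cs)} | i. i < length cs}"
    using assms(1) unfolding undirected_cycle_def by blast
  have "cs \<noteq> []" using cs(2) by auto
  then have "cycle_edges cs = (\<lambda>(a, b). {a, b}) ` E"
    by (simp add: cycle_edges_conv_nth cs(4))
  also have "\<dots> \<subseteq> undirected_edges A"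
    using assms(2) unfolding undirected_edges_def by (rule image_mono)
  finally show ?thesis using that cs unfolding is_cycle_def by blast
qed

section \<open>Splitting a cycle along a chord\<close>

text \<open>The cycle \<open>z1 # mid @ z2 # post\<close> consists of the arcs \<open>z1 # mid @ [z2]\<close> and
  \<open>z2 # post @ [z1]\<close>; a chord \<open>z1 # qs @ [z2]\<close> replaces the second one.\<close>

definition chord_sources :: "('a \<times> 'a) set \<Rightarrow> 'a list \<Rightarrow> 'a list \<Rightarrow> 'a set" where
  "chord_sources A cs Q = {v \<in> set Q - cycle_lower A cs. source_in A (walk_edges Q) v}"

lemma cycle_edges_replace_arc:
  "cycle_edges (z1 # mid @ z2 # rev qs)
    = walk_edges (z1 # mid @ [z2]) \<union> walk_edges (z1 # qs @ [z2])"
  using cycle_edges_split[of z1 mid z2 "rev qs"] walk_edges_rev[of "z1 # qs @ [z2]"] by simp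

lemma is_cycle_replace_arc:
  assumes cyc: "is_cycle A (z1 # mid @ z2 # post)"
    and qs: "distinct qs" "set qs \<inter> set (z1 # mid @ z2 # post) = {}"
      "walk_edges (z1 # qs @ [z2]) \<subseteq> undirected_edges A"
    and nondeg: "qs \<noteq> [] \<or> {z1, z2} \<notin> cycle_edges (z1 # mid @ z2 # post)"
  shows "is_cycle A (z1 # mid @ z2 # rev qs)"
proof -
  have "distinct (z1 # mid @ z2 # post)" "cycle_edges (z1 # mid @ z2 # post) \<subseteq> undirected_edges A"
    using cyc unfolding is_cycle_def by auto
  moreover have "mid \<noteq> [] \<or> qs \<noteq> []" using nondeg by (auto simp: cycle_edges_split)
  ultimately show ?thesis
    using qs unfolding is_cycle_def cycle_edges_replace_arc
    by (auto simp: cycle_edges_split Suc_le_eq)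
qed

lemma cycle_split_side:
  assumes cyc: "is_cycle A (z1 # mid @ z2 # post)" and asym: "asym A"
    and qs: "distinct qs" "set qs \<inter> set (z1 # mid @ z2 # post) = {}"
      "walk_edges (z1 # qs @ [z2]) \<subseteq> undirected_edges A"
    and nondeg: "qs \<noteq> [] \<or> {z1, z2} \<notin> cycle_edges (z1 # mid @ z2 # post)"
  shows "cycle_upper A (z1 # mid @ z2 # rev qs)
    \<subseteq> (cycle_upper A (z1 # mid @ z2 # post) \<inter> set mid)
      \<union> chord_sources A (z1 # mid @ z2 # post) (z1 # qs @ [z2])"
proof
  let ?cs = "z1 # mid @ z2 # post" and ?C = "z1 # mid @ z2 # rev qs"
  let ?P = "walk_edges (z1 # mid @ [z2])" and ?Q = "walk_edges (z1 # qs @ [z2])"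
  have E: "cycle_edges ?cs = ?P \<union> walk_edges (z2 # post @ [z1])" by (rule cycle_edges_split)
  fix v assume "v \<in> cycle_upper A ?C"
  then have vC: "v \<in> set ?C" and src: "source_in A (?P \<union> ?Q) v"
    using is_cycle_upper_iff[OF is_cycle_replace_arc[OF cyc qs nondeg]]
    unfolding cycle_edges_replace_arc by auto
  show "v \<in> (cycle_upper A ?cs \<inter> set mid) \<union> chord_sources A ?cs (z1 # qs @ [z2])"
  proof (cases "v \<in> set mid")
    case True
    then have "v \<notin> set (z1 # qs @ [z2])" "v \<notin> set (z2 # post @ [z1])"
      using cyc qs(2) unfolding is_cycle_def by auto
    then have "source_in A (cycle_edges ?cs) v"
      using src E source_in_walk_edges_notin by (metis source_in_Un)
    then show ?thesis using True is_cycle_upper_iff[OF cyc] by auto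
  next
    case False
    then have vQ: "v \<in> set (z1 # qs @ [z2])" using vC by auto
    have "v \<notin> cycle_lower A ?cs"
    proof
      assume low: "v \<in> cycle_lower A ?cs"
      then have "v \<in> set (z1 # mid @ [z2])" using vQ qs(2) is_cycle_lower_iff[OF cyc] by auto
      then obtain w where "{v, w} \<in> ?P" using walk_edges_incident by fastforce
      then show False using cycle_lower_not_source[OF asym cyc low] src E by blast
    qed
    then show ?thesis using vQ src unfolding chord_sources_def by auto
  qed
qed

lemma cycle_split_rotated:
  assumes cyc: "is_cycle A (z1 # mid @ z2 # post)" and asym: "asym A"
    and qs: "distinct qs" "set qs \<inter> set (z1 # mid @ z2 # post) = {}"
      "walk_edges (z1 # qs @ [z2]) \<subseteq> undirected_edges A"
    and nondeg: "qs \<noteq> [] \<or> {z1, z2} \<notin> cycle_edges (z1 # mid @ z2 # post)"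
  defines "N \<equiv> chord_sources A (z1 # mid @ z2 # post) (z1 # qs @ [z2])"
  shows "is_cycle A (z1 # mid @ z2 # rev qs)" "is_cycle A (z2 # post @ z1 # qs)"
    and "cycle_upper A (z1 # mid @ z2 # rev qs)
      \<subseteq> (cycle_upper A (z1 # mid @ z2 # post) \<inter> set mid) \<union> N"
    and "cycle_upper A (z2 # post @ z1 # qs)
      \<subseteq> (cycle_upper A (z1 # mid @ z2 # post) \<inter> set post) \<union> N"
    and "cycle_upper A (z1 # mid @ z2 # rev qs) \<inter> cycle_upper A (z2 # post @ z1 # qs)
      \<inter> set (z1 # mid @ z2 # post) \<subseteq> cycle_upper A (z1 # mid @ z2 # post)"
proof -
  let ?cs = "z1 # mid @ z2 # post" and ?cs2 = "z2 # post @ z1 # mid"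
  let ?C1 = "z1 # mid @ z2 # rev qs" and ?C2 = "z2 # post @ z1 # qs"
  obtain k where rot: "rotate k ?cs = ?cs2"
    using rotate_append[of "z1 # mid" "z2 # post"] by (metis append_Cons)
  have same: "is_cycle A ?cs2" "set ?cs2 = set ?cs" "cycle_edges ?cs2 = cycle_edges ?cs"
      "cycle_arcs A ?cs2 = cycle_arcs A ?cs"
    using cyc unfolding rot[symmetric] by simp_all
  have qs2: "distinct (rev qs)" "set (rev qs) \<inter> set ?cs2 = {}"
      "walk_edges (z2 # rev qs @ [z1]) \<subseteq> undirected_edges A"
      "rev qs \<noteq> [] \<or> {z2, z1} \<notin> cycle_edges ?cs2"
    using qs nondeg same walk_edges_rev[of "z1 # qs @ [z2]"] by (auto simp: insert_commute)
  have "chord_sources A ?cs2 (z2 # rev qs @ [z1]) = N"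
    unfolding N_def chord_sources_def same(2,4) using walk_edges_rev[of "z1 # qs @ [z2]"] by auto
  note side2 = is_cycle_replace_arc[OF same(1) qs2]
    cycle_split_side[OF same(1) asym qs2, unfolded this]
  show C1: "is_cycle A ?C1" by (rule is_cycle_replace_arc[OF cyc qs nondeg])
  show C2: "is_cycle A ?C2" using side2(1) by simp
  show "cycle_upper A ?C1 \<subseteq> (cycle_upper A ?cs \<inter> set mid) \<union> N"
    unfolding N_def by (rule cycle_split_side[OF cyc asym qs nondeg])
  show "cycle_upper A ?C2 \<subseteq> (cycle_upper A ?cs \<inter> set post) \<union> N"
    using side2(2) unfolding same(2,4) by simp
  have edges: "cycle_edges ?cs \<subseteq> cycle_edges ?C1 \<union> cycle_edges ?C2"
    by (auto simp: cycle_edges_split)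
  show "cycle_upper A ?C1 \<inter> cycle_upper A ?C2 \<inter> set ?cs \<subseteq> cycle_upper A ?cs"
  proof
    fix v assume "v \<in> cycle_upper A ?C1 \<inter> cycle_upper A ?C2 \<inter> set ?cs"
    then have "v \<in> set ?cs" "source_in A (cycle_edges ?C1 \<union> cycle_edges ?C2) v"
      using is_cycle_upper_iff[OF C1] is_cycle_upper_iff[OF C2] by auto
    then show "v \<in> cycle_upper A ?cs"
      using is_cycle_upper_iff[OF cyc] source_in_antimono[OF _ edges] by blast
  qed
qed

lemma cycle_split:
  assumes cyc: "is_cycle A cs" and asym: "asym A"
    and z: "z1 \<in> set cs" "z2 \<in> set cs" "z1 \<noteq> z2"
    and qs: "distinct qs" "set qs \<inter> set cs = {}"
      "walk_edges (z1 # qs @ [z2]) \<subseteq> undirected_edges A"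
    and nondeg: "qs \<noteq> [] \<or> {z1, z2} \<notin> cycle_edges cs"
  obtains C1 C2 S1 S2 where "is_cycle A C1" "is_cycle A C2" "set C1 \<union> set C2 \<subseteq> set cs \<union> set qs"
    "S1 \<inter> S2 = {}" "z1 \<notin> S1 \<union> S2" "z2 \<notin> S1 \<union> S2"
    "cycle_upper A C1 \<subseteq> (cycle_upper A cs \<inter> S1) \<union> chord_sources A cs (z1 # qs @ [z2])"
    "cycle_upper A C2 \<subseteq> (cycle_upper A cs \<inter> S2) \<union> chord_sources A cs (z1 # qs @ [z2])"
    "cycle_upper A C1 \<inter> cycle_upper A C2 \<inter> set cs \<subseteq> cycle_upper A cs"
proof -
  obtain pre rest where cs: "cs = pre @ z1 # rest" using z(1) by (meson split_list)
  moreover have "z2 \<in> set (rest @ pre)" using z cs by auto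
  then obtain mid post where "rest @ pre = mid @ z2 # post" by (meson split_list)
  ultimately have rot: "rotate (length pre) cs = z1 # mid @ z2 # post"
    by (simp add: rotate_append)
  let ?cs = "z1 # mid @ z2 # post"
  have same: "is_cycle A ?cs" "set ?cs = set cs" "cycle_edges ?cs = cycle_edges cs"
      "cycle_arcs A ?cs = cycle_arcs A cs"
    using cyc unfolding rot[symmetric] by simp_all
  then have chord: "chord_sources A ?cs (z1 # qs @ [z2]) = chord_sources A cs (z1 # qs @ [z2])"
    unfolding chord_sources_def by simp
  have qs': "set qs \<inter> set ?cs = {}" "qs \<noteq> [] \<or> {z1, z2} \<notin> cycle_edges ?cs"
    using qs(2) nondeg same(2,3) by simp_all
  note split = cycle_split_rotated[OF same(1) asym qs(1) qs'(1) qs(3) qs'(2),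
    unfolded chord same(2-4)]
  have "set (z1 # mid @ z2 # rev qs) \<union> set (z2 # post @ z1 # qs) \<subseteq> set cs \<union> set qs"
    using same(2) by auto
  moreover have "distinct ?cs" using same(1) unfolding is_cycle_def by simp
  then have "set mid \<inter> set post = {}" "z1 \<notin> set mid \<union> set post" "z2 \<notin> set mid \<union> set post"
    by auto
  ultimately show ?thesis using split(3-5) by (rule that[OF split(1,2)])
qed

section \<open>Directed paths\<close>

lemma dpath_iff: "dpath A p \<longleftrightarrow> p \<noteq> [] \<and> distinct p \<and> successively (\<lambda>x y. (x, y) \<in> A) p"
  unfolding dpath_def successively_conv_nth by blast

lemma dpath_infix: "dpath A (xs @ ys @ zs) \<Longrightarrow> ys \<noteq> [] \<Longrightarrow> dpath A ys"
  by (auto simp: dpath_iff successively_append_iff)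

lemma dpath_Cons: "dpath A (x # y # p) \<longleftrightarrow> (x, y) \<in> A \<and> x \<notin> set (y # p) \<and> dpath A (y # p)"
  by (auto simp: dpath_iff)

lemma dpath_rev: "dpath (A\<inverse>) (rev p) \<longleftrightarrow> dpath A p"
  by (simp add: dpath_iff)

lemma dpath_reach: "dpath A p \<Longrightarrow> v \<in> set p \<Longrightarrow> (hd p, v) \<in> A\<^sup>*"
proof (induction p rule: induct_list012)
  case (3 x y p)
  then show ?case by (auto simp: dpath_Cons intro: converse_rtrancl_into_rtrancl)
qed auto

lemma dpath_reach_last: "dpath A p \<Longrightarrow> v \<in> set p \<Longrightarrow> (v, last p) \<in> A\<^sup>*"
proof -
  assume p: "dpath A p" and "v \<in> set p"
  then obtain xs ys where "p = xs @ v # ys" by (meson split_list)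
  moreover have "dpath A (v # ys)" using p dpath_infix[of A xs "v # ys" "[]"] calculation by simp
  ultimately show ?thesis using dpath_reach[of A "v # ys" "last (v # ys)"] by simp
qed

lemma rtrancl_dpath:
  assumes "acyclic A" "(a, b) \<in> A\<^sup>*"
  obtains p where "dpath A p" "hd p = a" "last p = b"
proof -
  have "\<exists>p. dpath A p \<and> hd p = a \<and> last p = b"
    using assms(2)
  proof (induction rule: converse_rtrancl_induct)
    case base
    then show ?case by (intro exI[of _ "[b]"]) (simp add: dpath_iff)
  next
    case (step y z)
    then obtain p where p: "dpath A p" "hd p = z" "last p = b" by blast
    have "y \<notin> set p"
    proof
      assume "y \<in> set p"
      then have "(z, y) \<in> A\<^sup>*" using dpath_reach[OF p(1)] p(2) by blast
      with step(1) have "(y, y) \<in> A\<^sup>+" by (rule rtrancl_into_trancl2)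
      then show False using assms(1) unfolding acyclic_def by blast
    qed
    then have "dpath A (y # p)" "hd (y # p) = y" "last (y # p) = b"
      using p step(1) by (auto simp: dpath_iff successively_Cons)
    then show ?case by blast
  qed
  then show ?thesis using that by blast
qed

lemma dpath_first_hit:
  assumes "dpath A p" "last p \<in> S" "last p \<noteq> hd p"
  obtains ys z where "dpath A (hd p # ys @ [z])" "z \<in> S" "set ys \<inter> S = {}"
proof -
  obtain x rest where p: "p = x # rest" using assms(1) by (cases p) (auto simp: dpath_iff)
  then have "last p \<in> set rest" using assms(3) by (cases rest) auto
  then have "\<exists>y\<in>set rest. y \<in> S" using assms(2) by blast
  then obtain ys z zs where split: "rest = ys @ z # zs" "z \<in> S" "\<forall>y\<in>set ys. y \<notin> S"
    by (rule split_list_first_propE)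
  have "dpath A (x # ys @ [z])"
    using dpath_infix[of A "[]" "x # ys @ [z]" zs] assms(1) p split(1) by simp
  then show ?thesis using that[of ys z] split(2,3) p by auto
qed

lemma dpath_last_hit:
  assumes "dpath A p" "hd p \<in> S" "hd p \<noteq> last p"
  obtains z ys where "dpath A (z # ys @ [last p])" "z \<in> S" "set ys \<inter> S = {}"
proof -
  have p: "p \<noteq> []" using assms(1) by (simp add: dpath_iff)
  then have "dpath (A\<inverse>) (rev p)" "last (rev p) \<in> S" "last (rev p) \<noteq> hd (rev p)"
    using assms by (simp_all add: dpath_rev last_rev hd_rev)
  then obtain ys z where "dpath (A\<inverse>) (hd (rev p) # ys @ [z])" "z \<in> S" "set ys \<inter> S = {}"
    by (rule dpath_first_hit)
  then show ?thesis
    using that[of z "rev ys"] dpath_rev[of A "z # rev ys @ [last p]"] p by (simp add: hd_rev)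
qed

lemma dpath_walk_edges: "dpath A p \<Longrightarrow> walk_edges p \<subseteq> undirected_edges A"
  by (induction p rule: walk_edges.induct) (auto simp: dpath_Cons undirected_edges_def)

lemma dpath_source_eq_hd:
  assumes "asym A" "dpath A p" "walk_edges p \<subseteq> F" "v \<in> set p" "source_in A F v"
  shows "v = hd p"
proof (rule ccontr)
  assume "v \<noteq> hd p"
  then have "v \<in> set (tl p)" using assms(4) by (cases p) auto
  then obtain i where "i < length (tl p)" "v = tl p ! i"
    by (auto simp: in_set_conv_nth)
  then have "Suc i < length p" "v = p ! Suc i" by (auto simp: nth_tl)
  then have "(p ! i, v) \<in> A" "{v, p ! i} \<in> F"
    using assms(2,3) unfolding dpath_def walk_edges_conv_nth by (auto simp: insert_commute)
  then show False using assms(1,5) unfolding source_in_def by (auto dest: asymD)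
qed

lemma dpaths_diverge:
  assumes "dpath A p" "dpath A q" "p \<noteq> q" "hd p = hd q" "last p = last q"
  obtains a u p' q' where "p = a @ u # p'" "q = a @ u # q'" "p' \<noteq> []" "q' \<noteq> []" "hd p' \<noteq> hd q'"
proof -
  obtain ps p' q' where pq: "p = ps @ p'" "q = ps @ q'" "p' = [] \<or> q' = [] \<or> hd p' \<noteq> hd q'"
    using longest_common_prefix by blast
  have ps_ne: "ps \<noteq> []" using assms pq by (cases p; cases q) (auto simp: dpath_iff)
  then have ps: "last ps \<in> set ps" by simp
  have "p' \<noteq> []"
  proof
    assume "p' = []"
    then have "q' \<noteq> []" "last q = last q'" using assms(3) pq by auto
    then have "last ps \<in> set q'" using assms(5) pq \<open>p' = []\<close> by simp
    then show False using ps assms(2) pq by (auto simp: dpath_iff)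
  qed
  moreover have "q' \<noteq> []"
  proof
    assume "q' = []"
    then have "p' \<noteq> []" "last p = last p'" using assms(3) pq by auto
    moreover have "last ps = last p'" using assms(5) pq \<open>q' = []\<close> \<open>p' \<noteq> []\<close> by simp
    ultimately have "last ps \<in> set p'" by simp
    then show False using ps assms(1) pq by (auto simp: dpath_iff)
  qed
  ultimately show ?thesis
    using that pq ps_ne by (metis append_butlast_last_id append_assoc append_Cons append_Nil)
qed

lemma dpaths_last_meet:
  assumes P1: "dpath A P1" and P2: "dpath A P2" and hd: "hd P1 = hd P2"
    and ends: "last P1 \<notin> set P2" "last P2 \<notin> set P1"
  obtains x c1 c2 where "dpath A (x # c1 @ [last P1])" "dpath A (x # c2 @ [last P2])"
    "set c1 \<inter> set (x # c2) = {}" "set (x # c1) \<subseteq> set P1" "set (x # c2) \<subseteq> set P2"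
proof -
  have "hd P1 \<in> set (rev P1)" "hd P1 \<in> set P2"
    using P1 P2 hd hd_in_set[of P1] hd_in_set[of P2] by (auto simp: dpath_iff)
  then have "\<exists>y\<in>set (rev P1). y \<in> set P2" by blast
  then obtain ys x zs where split: "rev P1 = ys @ x # zs" "x \<in> set P2" "\<forall>y\<in>set ys. y \<notin> set P2"
    by (rule split_list_first_propE)
  have "P1 = rev (ys @ x # zs)" using split(1) by (metis rev_rev_ident)
  then have P1': "P1 = rev zs @ x # rev ys" by simp
  then have "rev ys \<noteq> []" using ends(1) split(2) by auto
  then obtain c1 u1 where c1: "rev ys = c1 @ [u1]" by (cases "rev ys" rule: rev_cases) auto
  then have u1: "last P1 = u1" using P1' by simp
  obtain a2 b2 where P2': "P2 = a2 @ x # b2" using split(2) by (meson split_list)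
  then have "b2 \<noteq> []" using ends(2) P1' by auto
  then obtain c2 u2 where c2: "b2 = c2 @ [u2]" by (cases b2 rule: rev_cases) auto
  then have u2: "last P2 = u2" using P2' by simp
  show ?thesis
  proof
    show "dpath A (x # c1 @ [last P1])"
      using dpath_infix[of A "rev zs" "x # c1 @ [u1]" "[]"] P1 P1' c1 u1 by simp
    show "dpath A (x # c2 @ [last P2])"
      using dpath_infix[of A a2 "x # c2 @ [u2]" "[]"] P2 P2' c2 u2 by simp
    have "set c1 \<subseteq> set (rev ys)" "set (x # c2) \<subseteq> set P2" using c1 P2' c2 by auto
    then show "set c1 \<inter> set (x # c2) = {}" using split(3) by auto
    show "set (x # c1) \<subseteq> set P1" "set (x # c2) \<subseteq> set P2" using P1' c1 P2' c2 by auto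
  qed
qed

lemma dpaths_first_meet:
  assumes P1: "dpath A P1" and P2: "dpath A P2" and last: "last P1 = last P2"
    and starts: "hd P1 \<notin> set P2" "hd P2 \<notin> set P1"
  obtains x c1 c2 where "dpath A (hd P1 # c1 @ [x])" "dpath A (hd P2 # c2 @ [x])"
    "set c1 \<inter> set (x # c2) = {}" "set (x # c1) \<subseteq> set P1" "set (x # c2) \<subseteq> set P2"
proof -
  have ne: "P1 \<noteq> []" "P2 \<noteq> []" using P1 P2 by (auto simp: dpath_iff)
  have "dpath (A\<inverse>) (rev P1)" "dpath (A\<inverse>) (rev P2)" "hd (rev P1) = hd (rev P2)"
    "last (rev P1) \<notin> set (rev P2)" "last (rev P2) \<notin> set (rev P1)"
    using P1 P2 last starts ne by (simp_all add: dpath_rev hd_rev last_rev)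
  then obtain x c1 c2 where D: "dpath (A\<inverse>) (x # c1 @ [last (rev P1)])"
      "dpath (A\<inverse>) (x # c2 @ [last (rev P2)])" "set c1 \<inter> set (x # c2) = {}"
      "set (x # c1) \<subseteq> set (rev P1)" "set (x # c2) \<subseteq> set (rev P2)"
    by (rule dpaths_last_meet)
  moreover have "last (rev P1) = hd P1" "last (rev P2) = hd P2" using ne by (simp_all add: last_rev)
  ultimately show ?thesis
    using that[of "rev c1" x "rev c2"] dpath_rev[of A "hd P1 # rev c1 @ [x]"]
      dpath_rev[of A "hd P2 # rev c2 @ [x]"] by auto
qed

lemma two_dpaths_cycle:
  assumes "asym A" "dpath A p" "dpath A q" "p \<noteq> q" "hd p = hd q" "last p = last q"
  obtains C u where "is_cycle A C" "set C \<subseteq> set p \<union> set q" "cycle_upper A C \<subseteq> {u}"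
proof -
  obtain a u p' q' where d: "p = a @ u # p'" "q = a @ u # q'" "p' \<noteq> []" "q' \<noteq> []" "hd p' \<noteq> hd q'"
    using dpaths_diverge[OF assms(2-6)] .
  have "last p' = last q'" using d assms(6) by simp
  then have "\<exists>y\<in>set p'. y \<in> set q'" using d(3,4) by (metis last_in_set)
  then obtain p1 m p2 where pd: "p' = p1 @ m # p2" "m \<in> set q'" "\<forall>y\<in>set p1. y \<notin> set q'"
    by (rule split_list_first_propE)
  obtain q1 q2 where qd: "q' = q1 @ m # q2" using pd(2) by (meson split_list)
  let ?C = "u # p1 @ m # rev q1" and ?P = "u # p1 @ [m]" and ?Q = "u # q1 @ [m]"
  have dP: "dpath A ?P" using dpath_infix[of A a ?P p2] assms(2) d(1) pd(1) by simp
  have dQ: "dpath A ?Q" using dpath_infix[of A a ?Q q2] assms(3) d(2) qd by simp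
  have edges: "cycle_edges ?C = walk_edges ?P \<union> walk_edges ?Q" by (rule cycle_edges_replace_arc)
  have "distinct ?C" using dP dQ pd(3) qd by (auto simp: dpath_iff)
  moreover have "p1 \<noteq> [] \<or> q1 \<noteq> []" using d(5) pd(1) qd by auto
  then have "3 \<le> length ?C" by (auto simp: Suc_le_eq)
  ultimately have cyc: "is_cycle A ?C"
    unfolding is_cycle_def using edges dpath_walk_edges[OF dP] dpath_walk_edges[OF dQ] by auto
  have "cycle_upper A ?C \<subseteq> {u}"
  proof
    fix v assume "v \<in> cycle_upper A ?C"
    then have "source_in A (cycle_edges ?C) v" "v \<in> set ?P \<or> v \<in> set ?Q"
      using is_cycle_upper_iff[OF cyc] by auto
    then show "v \<in> {u}"
      using dpath_source_eq_hd[OF assms(1) dP, of _ v] dpath_source_eq_hd[OF assms(1) dQ, of _ v]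
        edges by auto
  qed
  moreover have "set ?C \<subseteq> set p \<union> set q" using d pd qd by auto
  ultimately show ?thesis using that cyc by blast
qed

section \<open>Cycles with the fewest upper nodes\<close>

lemma acyclic_imp_asym: "acyclic A \<Longrightarrow> asym A"
  unfolding acyclic_def by (blast intro: asymI trancl_into_trancl2)

locale minimal_cycle =
  fixes A :: "('a \<times> 'a) set" and R :: "'a set" and cs :: "'a list"
  assumes acyclic: "acyclic A"
    and closed: "A `` R \<subseteq> R"
    and cycle: "is_cycle A cs" and cycle_in: "set cs \<subseteq> R"
    and minimal: "\<And>ds. is_cycle A ds \<Longrightarrow> set ds \<subseteq> R
      \<Longrightarrow> card (cycle_upper A cs) \<le> card (cycle_upper A ds)"
begin

lemma asym: "asym A"
  using acyclic by (rule acyclic_imp_asym)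

lemma rtrancl_in_R: "x \<in> R \<Longrightarrow> (x, y) \<in> A\<^sup>* \<Longrightarrow> y \<in> R"
  using ImageI[of x y "A\<^sup>*" R] Image_closed_trancl[OF closed] by simp

lemma dpath_in_R: "dpath A p \<Longrightarrow> hd p \<in> R \<Longrightarrow> set p \<subseteq> R"
  using dpath_reach rtrancl_in_R by (meson subsetI)

lemma finite_upper: "finite (cycle_upper A cs)"
  unfolding upper_nodes_def by simp

lemma not_fewer_upper:
  assumes "is_cycle A C" "set C \<subseteq> R"
  shows "\<not> card (cycle_upper A C) < card (cycle_upper A cs)"
  using minimal[OF assms] by simp

lemma upper_not_subset_Diff:
  assumes "is_cycle A C" "set C \<subseteq> R" "u \<in> cycle_upper A cs"
  shows "\<not> cycle_upper A C \<subseteq> cycle_upper A cs - {u}"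
proof
  assume "cycle_upper A C \<subseteq> cycle_upper A cs - {u}"
  then have "card (cycle_upper A C) \<le> card (cycle_upper A cs - {u})"
    using finite_upper by (intro card_mono) auto
  also have "\<dots> < card (cycle_upper A cs)" using finite_upper assms(3) by (rule card_Diff1_less)
  finally show False using not_fewer_upper[OF assms(1,2)] by simp
qed

lemma upper_not_subset_insert_Diff:
  assumes "is_cycle A C" "set C \<subseteq> R" "u1 \<in> cycle_upper A cs" "u2 \<in> cycle_upper A cs" "u1 \<noteq> u2"
  shows "\<not> cycle_upper A C \<subseteq> insert x (cycle_upper A cs - {u1} - {u2})"
proof
  assume "cycle_upper A C \<subseteq> insert x (cycle_upper A cs - {u1} - {u2})"
  then have "card (cycle_upper A C) \<le> card (insert x (cycle_upper A cs - {u1} - {u2}))"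
    using finite_upper by (intro card_mono) auto
  also have "\<dots> \<le> Suc (card (cycle_upper A cs - {u1} - {u2}))"
    using finite_upper by (simp add: card_insert_if)
  also have "\<dots> \<le> card (cycle_upper A cs - {u1})"
    using finite_upper assms(4,5) by (intro Suc_leI card_Diff1_less) auto
  also have "\<dots> < card (cycle_upper A cs)"
    using finite_upper assms(3) by (rule card_Diff1_less)
  finally show False using not_fewer_upper[OF assms(1,2)] by simp
qed

lemma upper_subset_if_upper_subset_Int:
  assumes "is_cycle A C" "set C \<subseteq> R" "cycle_upper A C \<subseteq> cycle_upper A cs \<inter> S"
  shows "cycle_upper A cs \<subseteq> S"
proof -
  have "card (cycle_upper A cs) \<le> card (cycle_upper A cs \<inter> S)"
    using minimal[OF assms(1,2)] card_mono[OF _ assms(3)] finite_upper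
    by (meson finite_Int le_trans)
  then have "cycle_upper A cs \<inter> S = cycle_upper A cs"
    using finite_upper by (meson Int_lower1 card_seteq)
  then show ?thesis by blast
qed

lemma chord_sources_nonempty:
  assumes z: "z1 \<in> set cs" "z2 \<in> set cs" "z1 \<noteq> z2"
    and qs: "distinct qs" "set qs \<inter> set cs = {}" "set qs \<subseteq> R"
      "walk_edges (z1 # qs @ [z2]) \<subseteq> undirected_edges A"
  shows "chord_sources A cs (z1 # qs @ [z2]) \<noteq> {}"
proof
  assume none: "chord_sources A cs (z1 # qs @ [z2]) = {}"
  have nondeg: "qs \<noteq> [] \<or> {z1, z2} \<notin> cycle_edges cs"
  proof (rule ccontr)
    assume "\<not> ?thesis"
    then have "qs = []" "{z1, z2} \<in> cycle_edges cs" by auto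
    moreover obtain x y where xy: "{x, y} = {z1, z2}" "(x, y) \<in> A"
      using qs(4) \<open>qs = []\<close> unfolding undirected_edges_def by auto
    ultimately have "source_in A (walk_edges (z1 # qs @ [z2])) x" "x \<in> set (z1 # qs @ [z2])"
      and edge: "{x, y} \<in> cycle_edges cs" "{x, y} \<in> walk_edges (z1 # qs @ [z2])"
      using z(3) unfolding source_in_def by (auto simp: doubleton_eq_iff insert_commute)
    moreover from this(1,2) have "x \<in> cycle_lower A cs"
      using none unfolding chord_sources_def by blast
    ultimately show False using cycle_lower_not_source[OF asym cycle _ edge] by blast
  qed
  obtain C1 C2 S1 S2 where split: "is_cycle A C1" "is_cycle A C2"
    "set C1 \<union> set C2 \<subseteq> set cs \<union> set qs" "S1 \<inter> S2 = {}" "z1 \<notin> S1 \<union> S2" "z2 \<notin> S1 \<union> S2"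
    "cycle_upper A C1 \<subseteq> cycle_upper A cs \<inter> S1 \<union> {}"
    "cycle_upper A C2 \<subseteq> cycle_upper A cs \<inter> S2 \<union> {}"
    by (rule cycle_split[OF cycle asym z qs(1,2,4) nondeg, unfolded none])
  have "set C1 \<subseteq> R" "set C2 \<subseteq> R" using split(3) cycle_in qs(3) by auto
  then have "cycle_upper A cs \<subseteq> S1" "cycle_upper A cs \<subseteq> S2"
    using upper_subset_if_upper_subset_Int split(1,2,7,8) by simp_all
  then show False
    using split(4) cycle_upper_nonempty[OF acyclic cycle] by blast
qed

lemma lower_node_no_exit:
  assumes l: "l \<in> cycle_lower A cs" and z: "z \<in> set cs" and reach: "(l, z) \<in> A\<^sup>*"
  shows "z = l"
proof (rule ccontr)
  assume "z \<noteq> l"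
  obtain p where p: "dpath A p" "hd p = l" "last p = z"
    using rtrancl_dpath[OF acyclic reach] .
  moreover have "last p \<in> set cs" "last p \<noteq> hd p" using p z \<open>z \<noteq> l\<close> by auto
  ultimately obtain ys z' where Q: "dpath A (l # ys @ [z'])"
    and z': "z' \<in> set cs" "set ys \<inter> set cs = {}"
    using dpath_first_hit[of A p "set cs"] by metis
  have lcs: "l \<in> set cs" using l unfolding lower_nodes_def by simp
  then have "set (l # ys @ [z']) \<subseteq> R" using dpath_in_R[OF Q] cycle_in by auto
  moreover have "l \<noteq> z'" "distinct ys" using Q by (auto simp: dpath_iff)
  moreover have "chord_sources A cs (l # ys @ [z']) = {}"
    using dpath_source_eq_hd[OF asym Q order_refl] l unfolding chord_sources_def by auto
  ultimately show False
    using chord_sources_nonempty[OF lcs z'(1) _ _ z'(2)] dpath_walk_edges[OF Q] by simp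
qed

lemma lower_nodes_no_common_descendant:
  assumes l1: "l1 \<in> cycle_lower A cs" and l2: "l2 \<in> cycle_lower A cs"
    and r1: "(l1, s) \<in> A\<^sup>*" and r2: "(l2, s) \<in> A\<^sup>*"
  shows "l1 = l2"
proof (rule ccontr)
  assume ne: "l1 \<noteq> l2"
  obtain P1 where P1: "dpath A P1" "hd P1 = l1" "last P1 = s" using rtrancl_dpath[OF acyclic r1] .
  obtain P2 where P2: "dpath A P2" "hd P2 = l2" "last P2 = s" using rtrancl_dpath[OF acyclic r2] .
  have cs: "l1 \<in> set cs" "l2 \<in> set cs" using l1 l2 unfolding lower_nodes_def by auto
  have on1: "y = l1" if "y \<in> set P1" "y \<in> set cs" for y
    using lower_node_no_exit[OF l1 that(2)] dpath_reach[OF P1(1) that(1)] P1(2) by simp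
  have on2: "y = l2" if "y \<in> set P2" "y \<in> set cs" for y
    using lower_node_no_exit[OF l2 that(2)] dpath_reach[OF P2(1) that(1)] P2(2) by simp
  have "last P1 = last P2" "hd P1 \<notin> set P2" "hd P2 \<notin> set P1"
    using on1 on2 cs ne P1(2,3) P2(2,3) by auto
  from dpaths_first_meet[OF P1(1) P2(1) this] obtain m c1 c2
    where D: "dpath A (l1 # c1 @ [m])" "dpath A (l2 # c2 @ [m])"
      "set c1 \<inter> set (m # c2) = {}" "set (m # c1) \<subseteq> set P1" "set (m # c2) \<subseteq> set P2"
    unfolding P1(2) P2(2) .
  txt \<open>The chord \<open>l1 \<rightarrow> \<dots> \<rightarrow> m \<leftarrow> \<dots> \<leftarrow> l2\<close> has no sources besides the lower nodes
    \<open>l1\<close> and \<open>l2\<close>.\<close>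
  let ?qs = "c1 @ m # rev c2" and ?D1 = "l1 # c1 @ [m]" and ?D2 = "l2 # c2 @ [m]"
  have walk: "walk_edges (l1 # ?qs @ [l2]) = walk_edges ?D1 \<union> walk_edges ?D2"
    using walk_edges_append[of "l1 # c1" m "rev c2 @ [l2]"] walk_edges_rev[of ?D2] by simp
  have "set P1 \<subseteq> R" "set P2 \<subseteq> R" using dpath_in_R P1(1,2) P2(1,2) cs cycle_in by auto
  have off1: "y \<notin> set cs" if "y \<in> set (m # c1)" for y
    using on1[of y] D(1,4) that by (auto simp: dpath_iff)
  have off2: "y \<notin> set cs" if "y \<in> set (m # c2)" for y
    using on2[of y] D(2,5) that by (auto simp: dpath_iff)
  have "v = l1 \<or> v = l2"
    if "v \<in> set (l1 # ?qs @ [l2])" "source_in A (walk_edges (l1 # ?qs @ [l2])) v" for v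
  proof -
    have "v \<in> set ?D1 \<or> v \<in> set ?D2" using that(1) by auto
    then show ?thesis
      using dpath_source_eq_hd[OF asym D(1), of _ v] dpath_source_eq_hd[OF asym D(2), of _ v]
        that(2) walk by auto
  qed
  then have "chord_sources A cs (l1 # ?qs @ [l2]) = {}"
    using l1 l2 unfolding chord_sources_def by blast
  moreover have "distinct ?qs" "set ?qs \<inter> set cs = {}"
    using D(1-3) off1 off2 by (auto simp: dpath_iff)
  moreover have "set ?qs \<subseteq> R" using D(4,5) \<open>set P1 \<subseteq> R\<close> \<open>set P2 \<subseteq> R\<close> by auto
  moreover have "walk_edges (l1 # ?qs @ [l2]) \<subseteq> undirected_edges A"
    using walk dpath_walk_edges[OF D(1)] dpath_walk_edges[OF D(2)] by simp
  ultimately show False using chord_sources_nonempty[OF cs ne] by blast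
qed

lemma chord_to_upper_node_sources:
  assumes z: "z \<in> set cs" and u: "u \<in> cycle_upper A cs" and "z \<noteq> u"
    and qs: "distinct qs" "set qs \<inter> set cs = {}" "set qs \<subseteq> R"
      "walk_edges (z # qs @ [u]) \<subseteq> undirected_edges A"
    and nondeg: "qs \<noteq> [] \<or> {z, u} \<notin> cycle_edges cs"
  shows "\<not> chord_sources A cs (z # qs @ [u]) \<subseteq> {z}"
proof
  assume new: "chord_sources A cs (z # qs @ [u]) \<subseteq> {z}"
  have ucs: "u \<in> set cs" using u unfolding upper_nodes_def by simp
  obtain C1 C2 S1 S2 where C: "is_cycle A C1" "is_cycle A C2"
    "set C1 \<union> set C2 \<subseteq> set cs \<union> set qs" "S1 \<inter> S2 = {}" "z \<notin> S1 \<union> S2" "u \<notin> S1 \<union> S2"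
    "cycle_upper A C1 \<subseteq> cycle_upper A cs \<inter> S1 \<union> chord_sources A cs (z # qs @ [u])"
    "cycle_upper A C2 \<subseteq> cycle_upper A cs \<inter> S2 \<union> chord_sources A cs (z # qs @ [u])"
    "cycle_upper A C1 \<inter> cycle_upper A C2 \<inter> set cs \<subseteq> cycle_upper A cs"
    by (rule cycle_split[OF cycle asym z ucs \<open>z \<noteq> u\<close> qs(1,2,4) nondeg])
  have U: "cycle_upper A C1 \<subseteq> cycle_upper A cs \<inter> S1 \<union> {z}"
    "cycle_upper A C2 \<subseteq> cycle_upper A cs \<inter> S2 \<union> {z}"
    using C(7,8) new by blast+
  have R: "set C1 \<subseteq> R" "set C2 \<subseteq> R" using C(3) cycle_in qs(3) by auto
  txt \<open>\<open>u\<close> is lost on both sides, and \<open>z\<close> is upper on both only if it already is in \<open>cs\<close>.\<close>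
  consider "z \<in> cycle_upper A cs" | "z \<notin> cycle_upper A C1" | "z \<notin> cycle_upper A C2"
    using C(9) z by blast
  then show False
  proof cases
    case 1
    then have "cycle_upper A C1 \<subseteq> cycle_upper A cs - {u}" using U(1) C(6) \<open>z \<noteq> u\<close> by blast
    then show False using upper_not_subset_Diff[OF C(1) R(1) u] by blast
  next
    case 2
    then have "cycle_upper A C1 \<subseteq> cycle_upper A cs - {u}" using U(1) C(6) by blast
    then show False using upper_not_subset_Diff[OF C(1) R(1) u] by blast
  next
    case 3
    then have "cycle_upper A C2 \<subseteq> cycle_upper A cs - {u}" using U(2) C(6) by blast
    then show False using upper_not_subset_Diff[OF C(2) R(2) u] by blast
  qed
qed

lemma chord_between_upper_nodes_sources:
  assumes u1: "u1 \<in> cycle_upper A cs" and u2: "u2 \<in> cycle_upper A cs" and "u1 \<noteq> u2"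
    and qs: "distinct qs" "set qs \<inter> set cs = {}" "set qs \<subseteq> R"
      "walk_edges (u1 # qs @ [u2]) \<subseteq> undirected_edges A"
    and nondeg: "qs \<noteq> [] \<or> {u1, u2} \<notin> cycle_edges cs"
  shows "\<not> chord_sources A cs (u1 # qs @ [u2]) \<subseteq> {x}"
proof
  assume new: "chord_sources A cs (u1 # qs @ [u2]) \<subseteq> {x}"
  have cs: "u1 \<in> set cs" "u2 \<in> set cs" using u1 u2 unfolding upper_nodes_def by auto
  obtain C1 S1 where C: "is_cycle A C1" "set C1 \<subseteq> set cs \<union> set qs" "u1 \<notin> S1" "u2 \<notin> S1"
    "cycle_upper A C1 \<subseteq> cycle_upper A cs \<inter> S1 \<union> chord_sources A cs (u1 # qs @ [u2])"
    using cycle_split[OF cycle asym cs \<open>u1 \<noteq> u2\<close> qs(1,2,4) nondeg] by (metis Un_iff Un_subset_iff)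
  have "set C1 \<subseteq> R" using C(2) cycle_in qs(3) by auto
  moreover have "cycle_upper A C1 \<subseteq> insert x (cycle_upper A cs - {u1} - {u2})"
    using C(3-5) new by blast
  ultimately show False using upper_not_subset_insert_Diff[OF C(1) _ u1 u2 \<open>u1 \<noteq> u2\<close>] by blast
qed

lemma upper_node_no_entry:
  assumes u: "u \<in> cycle_upper A cs" and z: "z \<in> set cs" and reach: "(z, u) \<in> A\<^sup>*"
  shows "z = u"
proof (rule ccontr)
  assume "z \<noteq> u"
  obtain p where p: "dpath A p" "hd p = z" "last p = u"
    using rtrancl_dpath[OF acyclic reach] .
  moreover have "hd p \<in> set cs" "hd p \<noteq> last p" using p z \<open>z \<noteq> u\<close> by auto
  ultimately obtain z' ys where Q: "dpath A (z' # ys @ [u])"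
    and z': "z' \<in> set cs" "set ys \<inter> set cs = {}"
    using dpath_last_hit[of A p "set cs"] by metis
  have "z' \<noteq> u" "distinct ys" using Q by (auto simp: dpath_iff)
  have "set ys \<subseteq> R" using dpath_in_R[OF Q] z'(1) cycle_in by auto
  have "ys \<noteq> [] \<or> {z', u} \<notin> cycle_edges cs"
  proof (rule ccontr)
    assume edge: "\<not> ?thesis"
    then have "(u, z') \<in> A"
      using u is_cycle_upper_iff[OF cycle] unfolding source_in_def by (auto simp: insert_commute)
    moreover have "(z', u) \<in> A" using Q edge by (auto simp: dpath_iff)
    ultimately show False using asym by (auto dest: asymD)
  qed
  moreover have "chord_sources A cs (z' # ys @ [u]) \<subseteq> {z'}"
    using dpath_source_eq_hd[OF asym Q order_refl] unfolding chord_sources_def by auto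
  ultimately show False
    using chord_to_upper_node_sources[OF z'(1) u \<open>z' \<noteq> u\<close> \<open>distinct ys\<close> z'(2) \<open>set ys \<subseteq> R\<close>
        dpath_walk_edges[OF Q]] by blast
qed

lemma upper_nodes_no_common_ancestor:
  assumes u1: "u1 \<in> cycle_upper A cs" and u2: "u2 \<in> cycle_upper A cs"
    and t: "t \<in> R" and r1: "(t, u1) \<in> A\<^sup>*" and r2: "(t, u2) \<in> A\<^sup>*"
  shows "u1 = u2"
proof (rule ccontr)
  assume ne: "u1 \<noteq> u2"
  obtain P1 where P1: "dpath A P1" "hd P1 = t" "last P1 = u1" using rtrancl_dpath[OF acyclic r1] .
  obtain P2 where P2: "dpath A P2" "hd P2 = t" "last P2 = u2" using rtrancl_dpath[OF acyclic r2] .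
  have cs: "u1 \<in> set cs" "u2 \<in> set cs" using u1 u2 unfolding upper_nodes_def by auto
  have on1: "y = u1" if "y \<in> set P1" "y \<in> set cs" for y
    using upper_node_no_entry[OF u1 that(2)] dpath_reach_last[OF P1(1) that(1)] P1(3) by simp
  have on2: "y = u2" if "y \<in> set P2" "y \<in> set cs" for y
    using upper_node_no_entry[OF u2 that(2)] dpath_reach_last[OF P2(1) that(1)] P2(3) by simp
  have "hd P1 = hd P2" "last P1 \<notin> set P2" "last P2 \<notin> set P1"
    using on1 on2 cs ne P1(2,3) P2(2,3) by auto
  from dpaths_last_meet[OF P1(1) P2(1) this] obtain x c1 c2
    where D: "dpath A (x # c1 @ [u1])" "dpath A (x # c2 @ [u2])"
      "set c1 \<inter> set (x # c2) = {}" "set (x # c1) \<subseteq> set P1" "set (x # c2) \<subseteq> set P2"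
    unfolding P1(3) P2(3) .
  txt \<open>The chord \<open>u1 \<leftarrow> \<dots> \<leftarrow> x \<rightarrow> \<dots> \<rightarrow> u2\<close> trades the upper nodes \<open>u1\<close> and \<open>u2\<close>
    for the single new source \<open>x\<close>.\<close>
  let ?qs = "rev c1 @ x # c2" and ?D1 = "x # c1 @ [u1]" and ?D2 = "x # c2 @ [u2]"
  have walk: "walk_edges (u1 # ?qs @ [u2]) = walk_edges ?D1 \<union> walk_edges ?D2"
    using walk_edges_append[of "u1 # rev c1" x "c2 @ [u2]"] walk_edges_rev[of ?D1] by simp
  have "set P1 \<subseteq> R" "set P2 \<subseteq> R" using dpath_in_R P1(1,2) P2(1,2) t by simp_all
  have off1: "y \<notin> set cs" if "y \<in> set (x # c1)" for y
    using on1[of y] D(1,4) that by (auto simp: dpath_iff)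
  have off2: "y \<notin> set cs" if "y \<in> set (x # c2)" for y
    using on2[of y] D(2,5) that by (auto simp: dpath_iff)
  have "v = x" if "v \<in> set (u1 # ?qs @ [u2])" "source_in A (walk_edges (u1 # ?qs @ [u2])) v" for v
  proof -
    have "v \<in> set ?D1 \<or> v \<in> set ?D2" using that(1) by auto
    then show "v = x"
      using dpath_source_eq_hd[OF asym D(1), of _ v] dpath_source_eq_hd[OF asym D(2), of _ v]
        that(2) walk by auto
  qed
  then have "chord_sources A cs (u1 # ?qs @ [u2]) \<subseteq> {x}"
    unfolding chord_sources_def by blast
  moreover have "distinct ?qs" "set ?qs \<inter> set cs = {}"
    using D(1-3) off1 off2 by (auto simp: dpath_iff)
  moreover have "set ?qs \<subseteq> R" using D(4,5) \<open>set P1 \<subseteq> R\<close> \<open>set P2 \<subseteq> R\<close> by auto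
  moreover have "walk_edges (u1 # ?qs @ [u2]) \<subseteq> undirected_edges A"
    using walk dpath_walk_edges[OF D(1)] dpath_walk_edges[OF D(2)] by simp
  ultimately show False using chord_between_upper_nodes_sources[OF u1 u2 ne] by blast
qed

lemma dpath_unique:
  assumes two: "2 \<le> card (cycle_upper A cs)"
    and p: "dpath A p" and q: "dpath A q" and R: "hd p \<in> R"
    and ends: "hd p = hd q" "last p = last q"
  shows "p = q"
proof (rule ccontr)
  assume "p \<noteq> q"
  obtain C u where C: "is_cycle A C" "set C \<subseteq> set p \<union> set q" "cycle_upper A C \<subseteq> {u}"
    by (rule two_dpaths_cycle[OF asym p q \<open>p \<noteq> q\<close> ends])
  have "set p \<subseteq> R" "set q \<subseteq> R" using dpath_in_R p q R ends(1) by simp_all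
  then have "set C \<subseteq> R" using C(2) by blast
  moreover have "card (cycle_upper A C) \<le> 1" using card_mono[OF _ C(3)] by simp
  ultimately show False using not_fewer_upper[OF C(1)] two by simp
qed

lemma card_upper_ge_2: "card (cycle_upper A cs) \<noteq> 1 \<Longrightarrow> 2 \<le> card (cycle_upper A cs)"
  using cycle_upper_nonempty[OF acyclic cycle] finite_upper
  by (cases "card (cycle_upper A cs)") auto

lemma separated_if_card_upper_ne_1:
  assumes "card (cycle_upper A cs) \<noteq> 1" "W \<subseteq> R"
  shows "\<forall>t\<in>W. \<forall>p q. dpath A p \<and> hd p = t \<and> last p = s \<and> dpath A q \<and> hd q = t \<and> last q = s
      \<longrightarrow> p = q"
    and "card ({v. (v, s) \<in> A\<^sup>*} \<inter> cycle_lower A cs) \<le> 1"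
    and "\<forall>t\<in>W. card ({v. (t, v) \<in> A\<^sup>*} \<inter> cycle_upper A cs) \<le> 1"
proof -
  have two: "2 \<le> card (cycle_upper A cs)" using card_upper_ge_2[OF assms(1)] .
  show "\<forall>t\<in>W. \<forall>p q. dpath A p \<and> hd p = t \<and> last p = s \<and> dpath A q \<and> hd q = t \<and> last q = s
      \<longrightarrow> p = q"
  proof (intro ballI allI impI)
    fix t p q assume "t \<in> W" "dpath A p \<and> hd p = t \<and> last p = s \<and> dpath A q \<and> hd q = t \<and> last q = s"
    then show "p = q" using assms(2) by (intro dpath_unique[OF two]) auto
  qed
  have "finite ({v. (v, s) \<in> A\<^sup>*} \<inter> cycle_lower A cs)" unfolding lower_nodes_def by simp
  moreover have "\<forall>l1\<in>{v. (v, s) \<in> A\<^sup>*} \<inter> cycle_lower A cs.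
      \<forall>l2\<in>{v. (v, s) \<in> A\<^sup>*} \<inter> cycle_lower A cs. l1 = l2"
    using lower_nodes_no_common_descendant by blast
  ultimately show "card ({v. (v, s) \<in> A\<^sup>*} \<inter> cycle_lower A cs) \<le> 1"
    by (simp add: card_le_Suc0_iff_eq)
  show "\<forall>t\<in>W. card ({v. (t, v) \<in> A\<^sup>*} \<inter> cycle_upper A cs) \<le> 1"
  proof
    fix t assume "t \<in> W"
    have "finite ({v. (t, v) \<in> A\<^sup>*} \<inter> cycle_upper A cs)" using finite_upper by simp
    moreover have "\<forall>u1\<in>{v. (t, v) \<in> A\<^sup>*} \<inter> cycle_upper A cs.
        \<forall>u2\<in>{v. (t, v) \<in> A\<^sup>*} \<inter> cycle_upper A cs. u1 = u2"
      using upper_nodes_no_common_ancestor \<open>t \<in> W\<close> assms(2) by blast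
    ultimately show "card ({v. (t, v) \<in> A\<^sup>*} \<inter> cycle_upper A cs) \<le> 1"
      by (simp add: card_le_Suc0_iff_eq)
  qed
qed

end

lemma minimal_cycle_exists:
  assumes "acyclic A" "A `` R \<subseteq> R" "is_cycle A cs0" "set cs0 \<subseteq> R"
  obtains cs where "minimal_cycle A R cs"
proof -
  obtain cs where "is_cycle A cs \<and> set cs \<subseteq> R"
    "\<And>ds. is_cycle A ds \<and> set ds \<subseteq> R \<Longrightarrow> card (cycle_upper A cs) \<le> card (cycle_upper A ds)"
    using ex_has_least_nat[of "\<lambda>cs. is_cycle A cs \<and> set cs \<subseteq> R" cs0 "\<lambda>cs. card (cycle_upper A cs)"]
      assms(3,4) by blast
  then have "minimal_cycle A R cs" using assms(1,2) by unfold_locales auto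
  then show ?thesis by (rule that)
qed

section \<open>Simple linearizations\<close>

lemma simple_linearization_constraint_unique:
  assumes "simple_linearization n M C" "c \<in> C" "c' \<in> C" "\<Union>c = \<Union>c'"
    and "\<Union>c \<in> proper_monomials n M"
  shows "c = c'"
proof -
  have "\<forall>m\<in>proper_monomials n M. \<exists>!d. d \<in> C \<and> \<Union>d = m"
    using assms(1) unfolding simple_linearization_def by simp
  from bspec[OF this assms(5)] show ?thesis using assms(2-4) by auto
qed

text \<open>Counting: \<open>\<Union>\<close> maps the constraints with a proper resultant bijectively onto the proper
  monomials, and there are as many of these as constraints.\<close>

lemma simple_linearization_resultant_proper:
  assumes "simple_linearization n M C" "c \<in> C"
  shows "\<Union>c \<in> proper_monomials n M"
proof -
  let ?P = "proper_monomials n M" and ?C' = "{c \<in> C. \<Union>c \<in> proper_monomials n M}"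
  have lin: "linearization n M C" and card: "card C = card ?P"
    and ex: "\<forall>m\<in>?P. \<exists>!c. c \<in> C \<and> \<Union>c = m"
    using assms(1) unfolding simple_linearization_def by auto
  have "M \<subseteq> Pow {1..n}" "C \<subseteq> Pow M" using lin unfolding linearization_def by auto
  then have "finite C" by (meson finite_Pow_iff finite_atLeastAtMost finite_subset)
  have "inj_on Union ?C'"
    using simple_linearization_constraint_unique[OF assms(1)] unfolding inj_on_def by blast
  moreover have "Union ` ?C' = ?P"
    using ex by (auto intro: rev_image_eqI)
  ultimately have "card ?C' = card C" using card card_image by metis
  then have "?C' = C" using \<open>finite C\<close> by (intro card_subset_eq) auto
  then show ?thesis using assms(2) by blast
qed

lemma simple_linearization_arc_card_less:
  assumes "simple_linearization n M C" "(a, b) \<in> arcs C"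
  shows "card b < card a"
proof -
  obtain c where c: "c \<in> C" "a = \<Union>c" "b \<in> c" using assms(2) unfolding arcs_def by blast
  then have a: "a \<in> proper_monomials n M"
    using simple_linearization_resultant_proper[OF assms(1)] by simp
  have "\<forall>m\<in>proper_monomials n M. \<exists>c\<in>C. \<Union>c = m \<and> (\<forall>m'\<in>c. card m' < card m)"
    using assms(1) unfolding simple_linearization_def linearization_def by simp
  from bspec[OF this a] obtain c' where c': "c' \<in> C" "\<Union>c' = a" "\<forall>m'\<in>c'. card m' < card a"
    by blast
  have "c' = c"
    using simple_linearization_constraint_unique[OF assms(1) c'(1) c(1)] c'(2) c(2) a by simp
  then show ?thesis using c(3) c'(3) by simp
qed

lemma simple_linearization_acyclic: "simple_linearization n M C \<Longrightarrow> acyclic (arcs C)"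
  by (rule acyclicI_order[where f = card]) (rule simple_linearization_arc_card_less)

lemma succs_eq_Image: "succs C W = (arcs C)\<^sup>* `` W"
  unfolding succs_def by blast

lemma arcs_Image_succs: "arcs C `` succs C W \<subseteq> succs C W"
  unfolding succs_eq_Image by (auto intro: rtrancl_into_rtrancl)

lemma simple_linearization_succs_subset:
  assumes "simple_linearization n M C" "W \<subseteq> proper_monomials n M"
  shows "succs C W \<subseteq> M"
proof -
  have "arcs C `` M \<subseteq> M"
    using assms(1) unfolding simple_linearization_def linearization_def arcs_def by blast
  then have "(arcs C)\<^sup>* `` M = M" by (rule Image_closed_trancl)
  moreover have "W \<subseteq> M" using assms(2) unfolding proper_monomials_def by blast
  ultimately show ?thesis unfolding succs_eq_Image by blast
qed

lemma cycle_is_subgraph: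
  assumes "set cs \<subseteq> M"
  shows "is_subgraph M C (set cs) (cycle_arcs (arcs C) cs)"
  unfolding is_subgraph_def cycle_arcs_def using assms cycle_edges_subset by fastforce

theorem lemma3p12:
  fixes n :: nat and M :: "nat set set" and C :: "nat set set set" and T :: "nat set set"
  assumes "simple_linearization n M C"
    and "T \<subseteq> proper_monomials n M"
    and "\<exists>V E. is_subgraph M C V E \<and> undirected_cycle V E \<and> V \<subseteq> succs C T"
  shows "\<exists>V E. is_subgraph M C V E \<and> undirected_cycle V E \<and> V \<subseteq> succs C T \<and>
     (card (upper_nodes V E) = 1 \<or>
      ((\<forall>s\<in>singletons n. \<forall>t\<in>T. \<forall>p q.
          dpath (arcs C) p \<and> hd p = t \<and> last p = s \<and>
          dpath (arcs C) q \<and> hd q = t \<and> last q = s \<longrightarrow> p = q) \<and>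
       (\<forall>s\<in>singletons n. card (preds C {s} \<inter> lower_nodes V E) \<le> 1) \<and>
       (\<forall>t\<in>T. card (succs C {t} \<inter> upper_nodes V E) \<le> 1)))"
proof -
  let ?A = "arcs C" and ?R = "succs C T"
  obtain V E where VE: "is_subgraph M C V E" "undirected_cycle V E" "V \<subseteq> ?R"
    using assms(3) by blast
  have "E \<subseteq> ?A" using VE(1) unfolding is_subgraph_def by blast
  obtain cs0 where cs0: "is_cycle ?A cs0" "set cs0 = V"
    by (rule undirected_cycle_is_cycle[OF VE(2) \<open>E \<subseteq> ?A\<close>])
  obtain cs where "minimal_cycle ?A ?R cs"
    using minimal_cycle_exists[OF simple_linearization_acyclic[OF assms(1)] arcs_Image_succs cs0(1)]
      cs0(2) VE(3) by blast
  then interpret minimal_cycle ?A ?R cs .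
  have "T \<subseteq> ?R" unfolding succs_def by blast
  note separated = separated_if_card_upper_ne_1[OF _ this]
  have "?R \<subseteq> M" by (rule simple_linearization_succs_subset[OF assms(1,2)])
  then have "is_subgraph M C (set cs) (cycle_arcs ?A cs)"
    using cycle_in by (intro cycle_is_subgraph) blast
  moreover have "undirected_cycle (set cs) (cycle_arcs ?A cs)"
    using asym cycle by (rule is_cycle_undirected_cycle)
  moreover have "(\<forall>s\<in>singletons n. \<forall>t\<in>T. \<forall>p q.
          dpath ?A p \<and> hd p = t \<and> last p = s \<and> dpath ?A q \<and> hd q = t \<and> last q = s \<longrightarrow> p = q) \<and>
       (\<forall>s\<in>singletons n. card (preds C {s} \<inter> cycle_lower ?A cs) \<le> 1) \<and>
       (\<forall>t\<in>T. card (succs C {t} \<inter> cycle_upper ?A cs) \<le> 1)"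
    if "card (cycle_upper ?A cs) \<noteq> 1"
    using separated[OF that] unfolding preds_def succs_def by simp
  ultimately show ?thesis using cycle_in by blast
qed

end
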